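(* Let $\alpha>0$ and let $u:[0,1]\to\mathbb R$ be a measurable function with $u(0)=u(1)=0$ satisfying $u(1-x)+(1-x)^\alpha u\!\left(\tfrac{y}{1-x}\right)=u(y)+(1-y)^\alpha u\!\left(\tfrac{1-x-y}{1-y}\right)$ for all $x,y\in[0,1)$ with $x+y\in[0,1]$. Then $u$ is infinitely differentiable on $(0,1)$. *)

theory Defs
  imports "HOL-Analysis.Analysis"
begin

end

theory Submission
  imports Defs
begin

(* Extend u by zero to v. With a = 1 - x and s = y the equation reads
     v a = v s + (1 - s) powr \<alpha> * v ((a - s) / (1 - s)) - a powr \<alpha> * v (s / a).
   Measurability alone gives local boundedness: the superlevel sets {|v| > n} have small
   measure for large n, and the maps s \<mapsto> s / a and s \<mapsto> (a - s) / (1 - s) enlarge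
   measure by a bounded factor, so some s in a fixed interval has all three values on the
   right below n. Integrating the identity over s \<in> [c, d] and substituting then writes v a
   through indefinite integrals of v and of v t * (1 - t) powr (- \<alpha> - 2), evaluated at
   smooth functions of a. An indefinite integral of a C^k function is C^(k+1), so v
   bootstraps from continuity to C^\<infinity>. *)

section \<open>Functions of class \<open>C\<^sup>k\<close>\<close>

fun Ck_on :: "nat \<Rightarrow> 'a::real_normed_field set \<Rightarrow> ('a \<Rightarrow> 'a) \<Rightarrow> bool" where
  "Ck_on 0 S f \<longleftrightarrow> (\<forall>x\<in>S. isCont f x)"
| "Ck_on (Suc k) S f \<longleftrightarrow> (\<forall>x\<in>S. f field_differentiable (at x)) \<and> Ck_on k S (deriv f)"

lemma Ck_on_Suc_D: "Ck_on (Suc k) S f \<Longrightarrow> Ck_on k S f"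
  by (induction k arbitrary: f) (auto intro: field_differentiable_imp_continuous_at)

lemma Ck_on_imp_isCont: "Ck_on k S f \<Longrightarrow> x \<in> S \<Longrightarrow> isCont f x"
  by (cases k) (auto intro: field_differentiable_imp_continuous_at)

lemma Ck_on_imp_deriv_funpow_differentiable:
  "Ck_on (Suc k) S f \<Longrightarrow> x \<in> S \<Longrightarrow> (deriv ^^ k) f differentiable (at x)"
proof (induction k arbitrary: f)
  case 0
  then show ?case by (auto intro: field_differentiable_imp_differentiable)
next
  case (Suc k)
  then show ?case by (simp only: funpow_Suc_right o_def) simp
qed

lemma Ck_on_subset: "Ck_on k S f \<Longrightarrow> T \<subseteq> S \<Longrightarrow> Ck_on k T f"
  by (induction k arbitrary: f) auto

lemma Ck_on_cong:
  assumes "open S" "\<And>x. x \<in> S \<Longrightarrow> f x = g x" "Ck_on k S f"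
  shows "Ck_on k S g"
proof -
  have ev: "\<forall>\<^sub>F y in nhds x. f y = g y"
    if "\<And>x. x \<in> S \<Longrightarrow> f x = g x" "x \<in> S" for f g :: "'a \<Rightarrow> 'a" and x
    using eventually_nhds_in_open[OF \<open>open S\<close> that(2)] by (rule eventually_mono) (rule that(1))
  show ?thesis
    using assms(2,3)
  proof (induction k arbitrary: f g)
    case 0
    then show ?case using isCont_cong[OF ev[OF 0(1)]] by simp
  next
    case (Suc k)
    have "g field_differentiable (at x)" if x: "x \<in> S" for x
    proof -
      obtain f' where "(f has_field_derivative f') (at x)"
        using Suc.prems(2) x by (auto simp: field_differentiable_def)
      then have "(g has_field_derivative f') (at x)"
        using DERIV_cong_ev[OF refl ev[OF Suc.prems(1) x] refl] by simp
      then show ?thesis by (auto simp: field_differentiable_def)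
    qed
    moreover have "deriv f x = deriv g x" if "x \<in> S" for x
      using deriv_cong_ev[OF ev[OF Suc.prems(1) that] refl] .
    then have "Ck_on k S (deriv g)"
      using Suc.IH[of "deriv f" "deriv g"] Suc.prems(2) by simp
    ultimately show ?case by simp
  qed
qed

lemma Ck_on_local:
  "(\<And>x. x \<in> S \<Longrightarrow> \<exists>T. open T \<and> x \<in> T \<and> Ck_on k T f) \<Longrightarrow> Ck_on k S f"
proof (induction k arbitrary: f)
  case 0
  then show ?case by fastforce
next
  case (Suc k)
  have "Ck_on k S (deriv f)"
  proof (rule Suc.IH)
    fix x assume "x \<in> S"
    then obtain T where "open T" "x \<in> T" "Ck_on (Suc k) T f" using Suc.prems by blast
    then show "\<exists>T. open T \<and> x \<in> T \<and> Ck_on k T (deriv f)" by auto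
  qed
  moreover have "\<forall>x\<in>S. f field_differentiable (at x)"
    using Suc.prems by fastforce
  ultimately show ?case by simp
qed

lemma Ck_on_const: "Ck_on k S (\<lambda>x. c)"
proof (induction k arbitrary: c)
  case (Suc k)
  have "deriv (\<lambda>x. c) = (\<lambda>x. 0)" by (rule ext) simp
  with Suc.IH[of 0] show ?case by simp
qed simp

lemma Ck_on_ident: "Ck_on k S (\<lambda>x. x)"
proof (cases k)
  case (Suc k)
  have "deriv (\<lambda>x. x) = (\<lambda>x. 1)" by (rule ext) simp
  with Suc show ?thesis by (simp add: Ck_on_const)
qed simp

lemma Ck_on_add:
  "open S \<Longrightarrow> Ck_on k S f \<Longrightarrow> Ck_on k S g \<Longrightarrow> Ck_on k S (\<lambda>x. f x + g x)"
proof (induction k arbitrary: f g)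
  case (Suc k)
  then have "Ck_on k S (\<lambda>x. deriv f x + deriv g x)" by simp
  then have "Ck_on k S (deriv (\<lambda>x. f x + g x))"
    by (rule Ck_on_cong[OF \<open>open S\<close>, rotated]) (use Suc.prems in simp)
  with Suc.prems show ?case by (simp add: field_differentiable_add)
qed simp

lemma Ck_on_mult:
  "open S \<Longrightarrow> Ck_on k S f \<Longrightarrow> Ck_on k S g \<Longrightarrow> Ck_on k S (\<lambda>x. f x * g x)"
proof (induction k arbitrary: f g)
  case (Suc k)
  then have "Ck_on k S (\<lambda>x. f x * deriv g x + deriv f x * g x)"
    using Suc.prems(2,3)[THEN Ck_on_Suc_D] by (intro Ck_on_add Suc.IH) auto
  then have "Ck_on k S (deriv (\<lambda>x. f x * g x))"
    by (rule Ck_on_cong[OF \<open>open S\<close>, rotated]) (use Suc.prems in simp)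
  with Suc.prems show ?case by (simp add: field_differentiable_mult)
qed simp

lemma Ck_on_cmult: "open S \<Longrightarrow> Ck_on k S f \<Longrightarrow> Ck_on k S (\<lambda>x. c * f x)"
  by (rule Ck_on_mult[OF _ Ck_on_const])

lemma Ck_on_diff:
  assumes "open S" "Ck_on k S f" "Ck_on k S g"
  shows "Ck_on k S (\<lambda>x. f x - g x)"
proof -
  have "Ck_on k S (\<lambda>x. f x + (- 1) * g x)"
    by (intro Ck_on_add Ck_on_cmult assms)
  then show ?thesis by (rule Ck_on_cong[OF \<open>open S\<close>, rotated]) simp
qed

lemma Ck_on_compose:
  assumes "open S" "open T" "\<And>x. x \<in> S \<Longrightarrow> g x \<in> T" "Ck_on k T f" "Ck_on k S g"
  shows "Ck_on k S (\<lambda>x. f (g x))"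
  using assms(4,5)
proof (induction k arbitrary: f)
  case 0
  have "isCont (\<lambda>x. f (g x)) x" if "x \<in> S" for x
    using 0 assms(3)[OF that] that continuous_at_compose[of x g f] by (simp add: o_def)
  then show ?case by simp
next
  case (Suc k)
  have diff: "g field_differentiable (at x)" "f field_differentiable (at (g x))" if "x \<in> S" for x
    using Suc.prems assms(3)[OF that] that by auto
  have "Ck_on k S (\<lambda>x. deriv f (g x) * deriv g x)"
    using Suc.prems by (intro Ck_on_mult[OF \<open>open S\<close>] Suc.IH[OF _ Ck_on_Suc_D]) auto
  moreover have "deriv f (g x) * deriv g x = deriv (\<lambda>x. f (g x)) x" if "x \<in> S" for x
    using deriv_chain[OF diff[OF that]] by (simp add: o_def)
  ultimately have "Ck_on k S (deriv (\<lambda>x. f (g x)))"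
    by (rule Ck_on_cong[OF \<open>open S\<close>, rotated])
  moreover have "(\<lambda>x. f (g x)) field_differentiable (at x)" if "x \<in> S" for x
    using field_differentiable_compose[OF diff[OF that]] by (simp add: o_def)
  ultimately show ?case by simp
qed

lemma Ck_on_inverse:
  "open S \<Longrightarrow> Ck_on k S f \<Longrightarrow> (\<And>x. x \<in> S \<Longrightarrow> f x \<noteq> 0) \<Longrightarrow> Ck_on k S (\<lambda>x. inverse (f x))"
proof (induction k arbitrary: f)
  case (Suc k)
  then have "Ck_on k S (\<lambda>x. - 1 * (deriv f x * (inverse (f x) * inverse (f x))))"
    using Suc.prems(2)[THEN Ck_on_Suc_D] by (intro Ck_on_cmult Ck_on_mult Suc.IH) auto
  then have "Ck_on k S (deriv (\<lambda>x. inverse (f x)))"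
    by (rule Ck_on_cong[OF \<open>open S\<close>, rotated])
       (use Suc.prems in \<open>simp add: power2_eq_square divide_inverse\<close>)
  with Suc.prems show ?case by (simp add: field_differentiable_inverse)
qed (simp add: continuous_at_within_inverse)

lemma Ck_on_divide:
  assumes "open S" "Ck_on k S f" "Ck_on k S g" "\<And>x. x \<in> S \<Longrightarrow> g x \<noteq> 0"
  shows "Ck_on k S (\<lambda>x. f x / g x)"
  using Ck_on_mult[OF assms(1,2) Ck_on_inverse[OF assms(1,3,4)]] by (simp add: divide_inverse)

lemma Ck_on_powr_ident: "Ck_on k {0<..} (\<lambda>x::real. x powr b)"
proof (induction k arbitrary: b)
  case 0
  then show ?case by (auto intro!: DERIV_isCont has_real_derivative_powr)
next
  case (Suc k)
  have D: "((\<lambda>x. x powr b) has_field_derivative b * x powr (b - 1)) (at x)" if "x > 0" for x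
    using that by (simp add: has_real_derivative_powr)
  have "Ck_on k {0<..} (\<lambda>x. b * x powr (b - 1))"
    by (intro Ck_on_cmult Suc.IH) simp
  then have "Ck_on k {0<..} (deriv (\<lambda>x. x powr b))"
    by (rule Ck_on_cong[OF open_greaterThan, rotated]) (simp add: DERIV_imp_deriv[OF D])
  then show ?case using D field_differentiable_def by fastforce
qed

lemma Ck_on_powr:
  fixes f :: "real \<Rightarrow> real"
  assumes "open S" "Ck_on k S f" "\<And>x. x \<in> S \<Longrightarrow> 0 < f x"
  shows "Ck_on k S (\<lambda>x. f x powr b)"
  using Ck_on_compose[OF assms(1) open_greaterThan _ Ck_on_powr_ident assms(2)] assms(3)
  by simp

lemma Ck_on_0_indefinite_integral:
  fixes f :: "real \<Rightarrow> real"
  assumes "\<And>c. c < b \<Longrightarrow> f integrable_on {e..c}"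
  shows "Ck_on 0 {e<..<b} (\<lambda>x. integral {e..x} f)"
proof -
  have "isCont (\<lambda>x. integral {e..x} f) x" if x: "x \<in> {e<..<b}" for x
  proof -
    define c where "c = (x + b) / 2"
    have c: "c < b" "x \<in> interior {e..c}" using x unfolding c_def by auto
    then show ?thesis
      using indefinite_integral_continuous_1[OF assms[OF c(1)]] continuous_on_interior by blast
  qed
  then show ?thesis by simp
qed

lemma Ck_on_Suc_indefinite_integral:
  fixes f :: "real \<Rightarrow> real"
  assumes "\<And>c. c < b \<Longrightarrow> f integrable_on {e..c}" and "Ck_on k {e<..<b} f"
  shows "Ck_on (Suc k) {e<..<b} (\<lambda>x. integral {e..x} f)"
proof -
  have D: "((\<lambda>x. integral {e..x} f) has_field_derivative f x) (at x)" if x: "x \<in> {e<..<b}" for x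
  proof -
    define c where "c = (x + b) / 2"
    have c: "c < b" "x \<in> {e..c} - {}" "x \<in> interior {e..c}" using x unfolding c_def by auto
    have "((\<lambda>u. integral {e..u} f) has_vector_derivative f x) (at x within {e..c} - {})"
      using integral_has_vector_derivative_continuous_at[OF assms(1)[OF c(1)] c(2) finite.emptyI]
        Ck_on_imp_isCont[OF assms(2) x] continuous_at_imp_continuous_within by blast
    then show ?thesis
      using at_within_interior[OF c(3)] has_real_derivative_iff_has_vector_derivative by auto
  qed
  have "Ck_on k {e<..<b} (deriv (\<lambda>x. integral {e..x} f))"
    using assms(2)
    by (rule Ck_on_cong[OF open_greaterThanLessThan, rotated]) (simp_all add: DERIV_imp_deriv[OF D])
  then show ?thesis using D field_differentiable_def by fastforce
qed

section \<open>Measure and integration on intervals\<close>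

lemma measure_image_le_deriv_bound:
  fixes g g' :: "real \<Rightarrow> real"
  assumes T: "T \<in> sets lebesgue" "T \<subseteq> {p..q}"
    and der: "\<And>x. x \<in> {p..q} \<Longrightarrow> (g has_field_derivative g' x) (at x)"
    and cont: "continuous_on {p..q} g'"
    and inj: "inj_on g {p..q}"
    and bound: "\<And>x. x \<in> {p..q} \<Longrightarrow> \<bar>g' x\<bar> \<le> L"
  shows "g ` T \<in> lmeasurable" "measure lebesgue (g ` T) \<le> L * measure lebesgue T"
proof -
  have T_lmeas: "T \<in> lmeasurable"
    by (rule bounded_set_imp_lmeasurable) (use T bounded_subset bounded_closed_interval in blast)+
  have "(\<lambda>x. \<bar>g' x\<bar>) absolutely_integrable_on {p..q}"
    by (intro absolutely_integrable_continuous_real continuous_intros cont)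
  then have g'_int: "(\<lambda>x. \<bar>g' x\<bar>) absolutely_integrable_on T"
    using set_integrable_subset T by blast
  have "(\<lambda>x. \<bar>g' x\<bar> * 1) absolutely_integrable_on T \<and>
          integral T (\<lambda>x. \<bar>g' x\<bar> * 1) = integral T (\<lambda>x. \<bar>g' x\<bar>)
    \<longleftrightarrow> (\<lambda>x. 1::real) absolutely_integrable_on (g ` T) \<and>
          integral (g ` T) (\<lambda>x. 1) = integral T (\<lambda>x. \<bar>g' x\<bar>)"
  proof (rule has_absolute_integral_change_of_variables_1'[OF T(1)])
    show "(g has_field_derivative g' x) (at x within T)" if "x \<in> T" for x
      using der that T(2) has_field_derivative_at_within by blast
  qed (use inj_on_subset[OF inj T(2)] in simp)
  with g'_int have one_int: "(\<lambda>x. 1::real) absolutely_integrable_on (g ` T)"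
    and meas_eq: "integral (g ` T) (\<lambda>x. 1) = integral T (\<lambda>x. \<bar>g' x\<bar>)"
    by auto
  show gT: "g ` T \<in> lmeasurable"
    using one_int lmeasurable_iff_integrable_on set_lebesgue_integral_eq_integral(1) by blast
  have "measure lebesgue (g ` T) = integral T (\<lambda>x. \<bar>g' x\<bar>)"
    using lmeasure_integral[OF gT] meas_eq by simp
  also have "\<dots> \<le> integral T (\<lambda>x. L * 1)"
  proof (rule integral_le)
    show "(\<lambda>x. \<bar>g' x\<bar>) integrable_on T"
      using g'_int set_lebesgue_integral_eq_integral(1) by blast
    show "(\<lambda>x. L * 1) integrable_on T"
      using integrable_on_const[OF T_lmeas] by simp
    show "\<bar>g' x\<bar> \<le> L * 1" if "x \<in> T" for x
      using bound that T(2) by auto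
  qed
  also have "\<dots> = L * measure lebesgue T"
    using lmeasure_integral[OF T_lmeas] integral_mult_right[of T L "\<lambda>x. 1"] by simp
  finally show "measure lebesgue (g ` T) \<le> L * measure lebesgue T" .
qed

lemma absolutely_integrable_on_interval_if_bounded:
  fixes h :: "real \<Rightarrow> real"
  assumes "h \<in> borel_measurable borel" "\<And>x. x \<in> {c..d} \<Longrightarrow> \<bar>h x\<bar> \<le> M"
  shows "h absolutely_integrable_on {c..d}"
proof -
  have "integrable lebesgue (\<lambda>x. indicat_real {c..d} x *\<^sub>R h x)"
  proof (rule integrableI_bounded_set_indicator[where B=M])
    show "h \<in> borel_measurable lebesgue"
      using measurable_completion[of h lborel borel] assms(1) by simp
    show "emeasure lebesgue {c..d} < \<infinity>"
      using bounded_set_imp_lmeasurable[of "{c..d}"] by (simp add: fmeasurable_def)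
    show "AE x\<in>{c..d} in lebesgue. norm (h x) \<le> M"
      using assms(2) by auto
  qed simp
  then show ?thesis by (simp add: set_integrable_def)
qed

lemma measure_superlevel_sets_tendsto_0:
  fixes f :: "real \<Rightarrow> real"
  assumes "f \<in> borel_measurable borel" "A \<in> lmeasurable"
  shows "(\<lambda>n. measure lebesgue {x\<in>A. real n < \<bar>f x\<bar>}) \<longlonglongrightarrow> 0"
proof -
  define D where "D n = {x\<in>A. real n < \<bar>f x\<bar>}" for n :: nat
  have D_lmeas: "D n \<in> lmeasurable" for n
  proof -
    have "{x. real n < \<bar>f x\<bar>} \<in> sets borel"
      using assms(1) by measurable
    then have "{x. real n < \<bar>f x\<bar>} \<in> sets lebesgue" by simp
    moreover have "D n = A \<inter> {x. real n < \<bar>f x\<bar>}" unfolding D_def by auto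
    ultimately show ?thesis using fmeasurable_Int_fmeasurable[OF assms(2)] by simp
  qed
  have "(\<lambda>n. measure lebesgue (D n)) \<longlonglongrightarrow> measure lebesgue (\<Inter>n. D n)"
  proof (rule Lim_measure_decseq)
    show "range D \<subseteq> sets lebesgue" using D_lmeas by auto
    show "antimono_on UNIV D" by (rule monotone_onI) (auto simp: D_def)
    show "emeasure lebesgue (D n) \<noteq> \<infinity>" for n
      using fmeasurableD2[OF D_lmeas[of n]] by (metis infinity_ennreal_def)
  qed
  moreover have "(\<Inter>n. D n) = {}"
  proof safe
    fix x assume "x \<in> (\<Inter>n. D n)"
    then have "real (nat \<lceil>\<bar>f x\<bar>\<rceil>) < \<bar>f x\<bar>" unfolding D_def by blast
    then show "x \<in> {}" using real_nat_ceiling_ge[of "\<bar>f x\<bar>"] by linarith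
  qed
  ultimately show ?thesis unfolding D_def by simp
qed

lemma integral_interval_eq_diff:
  fixes f :: "real \<Rightarrow> real"
  assumes "e \<le> x" "x \<le> y" "f integrable_on {e..y}"
  shows "integral {x..y} f = integral {e..y} f - integral {e..x} f"
  using Henstock_Kurzweil_Integration.integral_combine[OF assms] by simp

lemma integral_divide_argument:
  fixes f :: "real \<Rightarrow> real"
  assumes "0 < a" "f integrable_on {c/a..d/a}"
  shows "(\<lambda>s. f (s / a)) integrable_on {c..d}"
    and "integral {c..d} (\<lambda>s. f (s / a)) = a * integral {c/a..d/a} f"
proof -
  have img: "(\<lambda>x. x / (1 / a)) ` {c/a..d/a} = {c..d}"
    using assms(1) image_divide_atLeastAtMost[of "1/a" "c/a" "d/a"] by simp
  show "(\<lambda>s. f (s / a)) integrable_on {c..d}"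
    using integrable_stretch_real[OF assms(2), of "1/a"] assms(1) img by simp
  show "integral {c..d} (\<lambda>s. f (s / a)) = a * integral {c/a..d/a} f"
    using integral_stretch_real[of "1/a" "c/a" "d/a" f] assms(1) img by simp
qed

section \<open>The involution \<open>s \<mapsto> (a - s) / (1 - s)\<close>\<close>

definition mobius :: "real \<Rightarrow> real \<Rightarrow> real" where
  "mobius a s = (a - s) / (1 - s)"

lemma one_minus_mobius: "s \<noteq> 1 \<Longrightarrow> 1 - mobius a s = (1 - a) / (1 - s)"
  by (simp add: mobius_def field_simps)

lemma mobius_mobius: "a \<noteq> 1 \<Longrightarrow> s \<noteq> 1 \<Longrightarrow> mobius a (mobius a s) = s"
proof -
  assume "a \<noteq> 1" "s \<noteq> 1"
  then have "a - mobius a s = s * (1 - a) / (1 - s)"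
    by (simp add: mobius_def field_simps)
  with \<open>a \<noteq> 1\<close> \<open>s \<noteq> 1\<close> show ?thesis
    by (simp add: mobius_def[of a "mobius a s"] one_minus_mobius)
qed

lemma mobius_antimono: "s \<le> t \<Longrightarrow> t < 1 \<Longrightarrow> a \<le> 1 \<Longrightarrow> mobius a t \<le> mobius a s"
proof -
  assume "s \<le> t" "t < 1" "a \<le> 1"
  moreover have "(a - s) * (1 - t) - (a - t) * (1 - s) = (1 - a) * (t - s)" by algebra
  moreover have "0 \<le> (1 - a) * (t - s)" using \<open>s \<le> t\<close> \<open>a \<le> 1\<close> by simp
  ultimately have "(a - t) * (1 - s) \<le> (a - s) * (1 - t)" by linarith
  with \<open>s \<le> t\<close> \<open>t < 1\<close> show ?thesis by (simp add: mobius_def divide_simps)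
qed

lemma mobius_less_one: "a < 1 \<Longrightarrow> s < 1 \<Longrightarrow> mobius a s < 1"
  by (simp add: mobius_def divide_simps)

lemma mobius_le: "0 \<le> s \<Longrightarrow> s < 1 \<Longrightarrow> a \<le> 1 \<Longrightarrow> mobius a s \<le> a"
  using mobius_antimono[of 0 s a] by (simp add: mobius_def)

lemma diff_le_mobius: "0 \<le> s \<Longrightarrow> s \<le> a \<Longrightarrow> s < 1 \<Longrightarrow> a - s \<le> mobius a s"
  using mult_right_le_one_le[of "a - s" "1 - s"] by (simp add: mobius_def le_divide_eq)

lemma has_field_derivative_mobius:
  "s \<noteq> 1 \<Longrightarrow> (mobius a has_field_derivative (a - 1) / (1 - s)^2) (at s)"
proof -
  assume "s \<noteq> 1"
  then have "((\<lambda>s. (a - s) / (1 - s)) has_field_derivative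
      ((0 - 1) * (1 - s) - (a - s) * (0 - 1)) / ((1 - s) * (1 - s))) (at s)"
    by (intro DERIV_divide DERIV_diff DERIV_const DERIV_ident) simp
  moreover have "(0 - 1) * (1 - s) - (a - s) * (0 - 1) = a - 1" by algebra
  ultimately show ?thesis by (simp add: mobius_def[abs_def] power2_eq_square)
qed

lemma mobius_image_interval:
  assumes "c \<le> d" "d < 1" "a < 1"
  shows "mobius a ` {mobius a d..mobius a c} = {c..d}"
proof
  show "mobius a ` {mobius a d..mobius a c} \<subseteq> {c..d}"
  proof
    fix s assume "s \<in> mobius a ` {mobius a d..mobius a c}"
    then obtain t where t: "mobius a d \<le> t" "t \<le> mobius a c" "s = mobius a t" by auto
    have c1: "mobius a c < 1" using mobius_less_one[of a c] assms by simp
    then have "t < 1" using t(2) by linarith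
    then have "mobius a t \<le> d" "c \<le> mobius a t"
      using mobius_antimono[OF t(1) \<open>t < 1\<close>, of a] mobius_antimono[OF t(2) c1, of a] assms
      by (simp_all add: mobius_mobius)
    then show "s \<in> {c..d}" using t(3) by simp
  qed
  show "{c..d} \<subseteq> mobius a ` {mobius a d..mobius a c}"
  proof
    fix s assume s: "s \<in> {c..d}"
    then have "mobius a s \<in> {mobius a d..mobius a c}"
      using assms by (auto intro: mobius_antimono)
    moreover have "s = mobius a (mobius a s)" using s assms by (simp add: mobius_mobius)
    ultimately show "s \<in> mobius a ` {mobius a d..mobius a c}" by blast
  qed
qed

lemma measure_mobius_image_le:
  assumes "T \<in> sets lebesgue" "T \<subseteq> {0..a}" "a < 1"
  shows "mobius a ` T \<in> lmeasurable" "measure lebesgue (mobius a ` T) \<le> measure lebesgue T / (1 - a)"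
proof -
  have der: "(mobius a has_field_derivative (a - 1) / (1 - s)^2) (at s)" if "s \<in> {0..a}" for s
    using that assms(3) by (intro has_field_derivative_mobius) simp
  have cont: "continuous_on {0..a} (\<lambda>s. (a - 1) / (1 - s)^2)"
    using assms(3) by (intro continuous_intros) auto
  have inj: "inj_on (mobius a) {0..a}"
    using assms(3) by (intro inj_on_inverseI[where g="mobius a"]) (auto simp: mobius_mobius)
  have bound: "\<bar>(a - 1) / (1 - s)^2\<bar> \<le> 1 / (1 - a)" if "s \<in> {0..a}" for s
  proof -
    have "(1 - a)^2 \<le> (1 - s)^2" using that assms by (intro power_mono) auto
    then have "(1 - a) / (1 - s)^2 \<le> (1 - a) / (1 - a)^2"
      using that assms by (intro divide_left_mono) auto
    then show ?thesis using that assms by (simp add: abs_div power2_eq_square)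
  qed
  show "mobius a ` T \<in> lmeasurable"
    by (rule measure_image_le_deriv_bound(1)[OF assms(1,2) der cont inj bound])
  show "measure lebesgue (mobius a ` T) \<le> measure lebesgue T / (1 - a)"
    using measure_image_le_deriv_bound(2)[OF assms(1,2) der cont inj bound] by simp
qed

lemma mobius_substitution:
  fixes F G :: "real \<Rightarrow> real"
  assumes "c \<le> d" "d < 1" "a < 1"
    and FG: "\<And>t. t \<in> {mobius a d..mobius a c} \<Longrightarrow> (1 - a) / (1 - t)^2 * F (mobius a t) = G t"
    and G: "G absolutely_integrable_on {mobius a d..mobius a c}"
  shows "F absolutely_integrable_on {c..d}"
    and "integral {c..d} F = integral {mobius a d..mobius a c} G"
proof -
  let ?I = "{mobius a d..mobius a c}"
  have lt1: "t < 1" if "t \<in> ?I" for t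
    using that mobius_less_one[of a c] assms(1-3) by auto
  have "(\<lambda>t. \<bar>(a - 1) / (1 - t)^2\<bar> * F (mobius a t)) absolutely_integrable_on ?I \<and>
          integral ?I (\<lambda>t. \<bar>(a - 1) / (1 - t)^2\<bar> * F (mobius a t)) = integral ?I G
    \<longleftrightarrow> F absolutely_integrable_on (mobius a ` ?I) \<and> integral (mobius a ` ?I) F = integral ?I G"
  proof (rule has_absolute_integral_change_of_variables_1')
    show "(mobius a has_field_derivative (a - 1) / (1 - t)^2) (at t within ?I)" if "t \<in> ?I" for t
      using lt1[OF that] by (simp add: has_field_derivative_mobius has_field_derivative_at_within)
    show "inj_on (mobius a) ?I"
    proof (rule inj_on_inverseI[where g="mobius a"])
      fix t assume "t \<in> ?I"
      then have "t \<noteq> 1" using lt1 by fastforce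
      then show "mobius a (mobius a t) = t" using assms(3) by (simp add: mobius_mobius)
    qed
  qed simp
  moreover have eq: "\<bar>(a - 1) / (1 - t)^2\<bar> * F (mobius a t) = G t" if "t \<in> ?I" for t
    using FG[OF that] assms(3) by (simp add: abs_div)
  moreover have "(\<lambda>t. \<bar>(a - 1) / (1 - t)^2\<bar> * F (mobius a t)) absolutely_integrable_on ?I"
    using eq by (intro absolutely_integrable_spike[OF G negligible_empty]) simp
  moreover have "integral ?I (\<lambda>t. \<bar>(a - 1) / (1 - t)^2\<bar> * F (mobius a t)) = integral ?I G"
    using eq by (rule integral_cong)
  ultimately have "F absolutely_integrable_on (mobius a ` ?I) \<and> integral (mobius a ` ?I) F = integral ?I G"
    by blast
  then show "F absolutely_integrable_on {c..d}" "integral {c..d} F = integral ?I G"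
    using mobius_image_interval[OF assms(1-3)] by auto
qed

lemma abs_powr_mult_le:
  fixes x \<alpha> y :: real
  assumes "0 \<le> x" "x \<le> 1" "0 \<le> \<alpha>"
  shows "\<bar>x powr \<alpha> * y\<bar> \<le> \<bar>y\<bar>"
proof -
  have "0 \<le> x powr \<alpha>" "x powr \<alpha> \<le> 1" using assms powr_le1[of \<alpha> x] by simp_all
  then show ?thesis by (simp add: abs_mult mult_left_le_one_le)
qed

lemma divide_square_mult_powr:
  fixes A B \<alpha> :: real
  assumes "A > 0" "B > 0"
  shows "A / B^2 * (A / B) powr \<alpha> = A powr (\<alpha> + 1) * B powr (- \<alpha> - 2)"
proof -
  have "B powr (- \<alpha> - 2) = 1 / (B powr \<alpha> * B^2)"
    using assms(2) by (simp add: powr_diff powr_minus_divide powr_add flip: powr_numeral)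
  moreover have "(A / B) powr \<alpha> = A powr \<alpha> / B powr \<alpha>"
    using assms by (simp add: powr_divide)
  moreover have "A powr (\<alpha> + 1) = A powr \<alpha> * A"
    using assms(1) by (simp add: powr_add)
  ultimately show ?thesis by (simp add: mult.commute)
qed

lemma representation_points:
  assumes "0 < e" "6 * e < a" "a < 1"
  shows "e < mobius a (4 * e)" "mobius a (4 * e) \<le> mobius a (2 * e)" "mobius a (2 * e) < 1"
    and "e < 2 * e / a" "2 * e / a \<le> 4 * e / a" "4 * e / a < 1"
proof -
  show "e < mobius a (4 * e)" using diff_le_mobius[of "4 * e" a] assms by simp
  show "mobius a (4 * e) \<le> mobius a (2 * e)" "mobius a (2 * e) < 1"
    using mobius_antimono[of "2 * e" "4 * e" a] mobius_less_one[of a "2 * e"] assms by simp_all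
  show "e < 2 * e / a" "2 * e / a \<le> 4 * e / a" "4 * e / a < 1"
    using assms by (simp_all add: divide_simps)
qed

lemma measure_union_scaled_mobius_images_le:
  fixes D :: "real set"
  assumes D: "D \<in> sets lebesgue" "D \<subseteq> {0..1}" and a: "0 < a" "a < 1"
  defines "B \<equiv> D \<union> (\<lambda>t. a * t) ` D \<union> mobius a ` (D \<inter> {0..a})"
  shows "B \<in> lmeasurable" "measure lebesgue B \<le> (2 + 1 / (1 - a)) * measure lebesgue D"
proof -
  have D_lmeas: "D \<in> lmeasurable"
    using bounded_set_imp_lmeasurable[OF bounded_subset[OF bounded_closed_interval D(2)] D(1)] .
  have scale_inj: "inj_on (\<lambda>t. a * t) {0..1}" using a by (auto simp: inj_on_def)
  have scale_der: "((\<lambda>t. a * t) has_field_derivative a) (at x)" for x :: real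
    by (rule DERIV_cmult_Id)
  have scale: "(\<lambda>t. a * t) ` D \<in> lmeasurable"
    "measure lebesgue ((\<lambda>t. a * t) ` D) \<le> a * measure lebesgue D"
    using measure_image_le_deriv_bound[OF D scale_der continuous_on_const scale_inj, of a] a by auto
  have scale_le: "measure lebesgue ((\<lambda>t. a * t) ` D) \<le> measure lebesgue D"
    using scale(2) a mult_left_le_one_le[of "measure lebesgue D" a] by auto
  have "D \<inter> {0..a} \<in> sets lebesgue" using D(1) by (intro sets.Int) simp_all
  note mob = measure_mobius_image_le[OF this _ a(2)]
  have "measure lebesgue (D \<inter> {0..a}) \<le> measure lebesgue D"
    using D(1) D_lmeas by (intro measure_mono_fmeasurable) auto
  then have mob_le: "measure lebesgue (mobius a ` (D \<inter> {0..a})) \<le> measure lebesgue D / (1 - a)"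
    using mob(2) a order.trans[OF mob(2) divide_right_mono] by auto
  show B: "B \<in> lmeasurable" unfolding B_def using D_lmeas scale(1) mob(1) by auto
  have "measure lebesgue B
      \<le> measure lebesgue (D \<union> (\<lambda>t. a * t) ` D) + measure lebesgue (mobius a ` (D \<inter> {0..a}))"
    unfolding B_def using D_lmeas scale(1) mob(1) by (intro measure_Un_le fmeasurable.Un) auto
  also have "\<dots> \<le> measure lebesgue D + measure lebesgue ((\<lambda>t. a * t) ` D)
      + measure lebesgue (mobius a ` (D \<inter> {0..a}))"
    using D_lmeas scale(1) measure_Un_le[of D lebesgue "(\<lambda>t. a * t) ` D"] by auto
  also have "\<dots> \<le> (2 + 1 / (1 - a)) * measure lebesgue D"
  proof -
    have "(2 + 1 / (1 - a)) * measure lebesgue D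
        = measure lebesgue D + measure lebesgue D + measure lebesgue D / (1 - a)"
      by (simp add: algebra_simps)
    with scale_le mob_le show ?thesis by linarith
  qed
  finally show "measure lebesgue B \<le> (2 + 1 / (1 - a)) * measure lebesgue D" .
qed

lemma exists_point_with_small_values:
  fixes v :: "real \<Rightarrow> real" and n :: nat
  assumes v: "v \<in> borel_measurable borel"
    and a: "0 < a" "a < 1" and cd: "0 \<le> c" "c \<le> d" "d \<le> a"
    and small: "(2 + 1 / (1 - a)) * measure lebesgue {x\<in>{0..1}. real n < \<bar>v x\<bar>} < d - c"
  shows "\<exists>s\<in>{c..d}. \<bar>v s\<bar> \<le> n \<and> \<bar>v (s / a)\<bar> \<le> n \<and> \<bar>v (mobius a s)\<bar> \<le> n"
proof (rule ccontr)
  define D where "D = {x\<in>{0..1}. real n < \<bar>v x\<bar>}"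
  define B where "B = D \<union> (\<lambda>t. a * t) ` D \<union> mobius a ` (D \<inter> {0..a})"
  have "{x. real n < \<bar>v x\<bar>} \<in> sets borel" using v by measurable
  then have "D \<in> sets lebesgue" "D \<subseteq> {0..1}" unfolding D_def by (auto simp: Collect_conj_eq)
  note B = measure_union_scaled_mobius_images_le[OF this a, folded B_def]
  assume no_good: "\<not> (\<exists>s\<in>{c..d}. \<bar>v s\<bar> \<le> n \<and> \<bar>v (s / a)\<bar> \<le> n \<and> \<bar>v (mobius a s)\<bar> \<le> n)"
  have "s \<in> B" if s: "s \<in> {c..d}" for s
  proof -
    have "\<not> (\<bar>v s\<bar> \<le> n \<and> \<bar>v (s / a)\<bar> \<le> n \<and> \<bar>v (mobius a s)\<bar> \<le> n)"
      using no_good s by blast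
    moreover have "a - s \<le> mobius a s" "mobius a s \<le> a"
      using s cd a diff_le_mobius[of s a] mobius_le[of s a] by simp_all
    moreover have "s \<in> {0..1}" "s / a \<in> {0..1}" using s cd a by (auto simp: divide_le_eq)
    ultimately have "s \<in> D \<or> s / a \<in> D \<or> mobius a s \<in> D \<inter> {0..a}"
      using s cd a unfolding D_def by auto
    moreover have "s = a * (s / a)" "s = mobius a (mobius a s)"
      using s cd a by (simp_all add: mobius_mobius)
    ultimately show "s \<in> B" unfolding B_def by blast
  qed
  then have "{c..d} \<subseteq> B" by blast
  then have "d - c \<le> measure lebesgue B"
    using B(1) cd measure_mono_fmeasurable[of "{c..d}" B lebesgue] by simp
  with B(2) small show False unfolding D_def by linarith
qed

section \<open>Solutions of the functional equation\<close>

(* The equation of the theorem for the zero extension v of u, with a = 1 - x and s = y. *)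
locale info_equation =
  fixes v :: "real \<Rightarrow> real" and \<alpha> :: real
  assumes alpha_pos: "\<alpha> > 0"
    and v_measurable[measurable]: "v \<in> borel_measurable borel"
    and v_equation: "\<And>a s. 0 < a \<Longrightarrow> a \<le> 1 \<Longrightarrow> 0 \<le> s \<Longrightarrow> s \<le> a \<Longrightarrow> s < 1 \<Longrightarrow>
        v a + a powr \<alpha> * v (s / a) = v s + (1 - s) powr \<alpha> * v (mobius a s)"
begin

lemma v_bounded_on_interval:
  assumes "0 < p" "q < 1"
  shows "\<exists>M. \<forall>x\<in>{p..q}. \<bar>v x\<bar> \<le> M"
proof -
  define L where "L = 2 + 1 / (1 - q)"
  have "L > 0" using assms unfolding L_def by (simp add: add_pos_pos)
  define \<eta> where "\<eta> = p / 4 / L"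
  have "\<eta> > 0" using assms \<open>L > 0\<close> unfolding \<eta>_def by simp
  moreover have "{0..1::real} \<in> lmeasurable" using lmeasurable_cbox[of 0 1] by simp
  ultimately have "\<forall>\<^sub>F n in sequentially. measure lebesgue {x\<in>{0..1}. real n < \<bar>v x\<bar>} < \<eta>"
    using order_tendstoD(2) measure_superlevel_sets_tendsto_0[OF v_measurable] by blast
  then obtain n :: nat where n: "measure lebesgue {x\<in>{0..1}. real n < \<bar>v x\<bar>} < \<eta>"
    unfolding eventually_sequentially by blast
  have "\<bar>v a\<bar> \<le> 3 * n" if a: "a \<in> {p..q}" for a
  proof -
    let ?m = "measure lebesgue {x\<in>{0..1}. real n < \<bar>v x\<bar>}"
    have a01: "0 < a" "a < 1" using a assms by auto
    have "1 / (1 - a) \<le> 1 / (1 - q)" using a assms by (simp add: frac_le)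
    then have "(2 + 1 / (1 - a)) * ?m \<le> L * ?m"
      unfolding L_def by (intro mult_right_mono) simp_all
    also have "\<dots> < L * \<eta>"
      using n \<open>L > 0\<close> by (intro mult_strict_left_mono)
    also have "\<dots> = p / 2 - p / 4"
      using \<open>L > 0\<close> unfolding \<eta>_def by simp
    finally obtain s where s: "s \<in> {p/4..p/2}" "\<bar>v s\<bar> \<le> n" "\<bar>v (s / a)\<bar> \<le> n" "\<bar>v (mobius a s)\<bar> \<le> n"
      using exists_point_with_small_values[OF v_measurable a01, of "p/4" "p/2" n] a assms by auto
    have s01: "0 \<le> s" "s \<le> a" "s < 1" using s(1) a assms by auto
    have "v a = v s + (1 - s) powr \<alpha> * v (mobius a s) - a powr \<alpha> * v (s / a)"
      using v_equation[OF a01(1) _ s01] a01 by simp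
    moreover have "\<bar>(1 - s) powr \<alpha> * v (mobius a s)\<bar> \<le> n" "\<bar>a powr \<alpha> * v (s / a)\<bar> \<le> n"
      using abs_powr_mult_le[of "1 - s" \<alpha> "v (mobius a s)"] abs_powr_mult_le[of a \<alpha> "v (s / a)"]
        s s01 a01 alpha_pos by simp_all
    ultimately show ?thesis using s(2) by linarith
  qed
  then show ?thesis by blast
qed

(* The factor (1 - t) powr (- \<alpha> - 2) comes from the Jacobian of the substitution s = mobius a t. *)
definition v_weighted :: "real \<Rightarrow> real" where
  "v_weighted t = v t * (1 - t) powr (- \<alpha> - 2)"

lemma v_weighted_measurable[measurable]: "v_weighted \<in> borel_measurable borel"
  unfolding v_weighted_def[abs_def] by measurable

lemma v_absolutely_integrable: "0 < p \<Longrightarrow> q < 1 \<Longrightarrow> v absolutely_integrable_on {p..q}"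
  using v_bounded_on_interval absolutely_integrable_on_interval_if_bounded[OF v_measurable] by blast

lemma v_weighted_absolutely_integrable:
  assumes "0 < p" "q < 1"
  shows "v_weighted absolutely_integrable_on {p..q}"
proof -
  obtain M where M: "\<forall>x\<in>{p..q}. \<bar>v x\<bar> \<le> M" using v_bounded_on_interval assms by blast
  have "\<bar>v_weighted x\<bar> \<le> M * (1 - q) powr (- \<alpha> - 2)" if x: "x \<in> {p..q}" for x
  proof -
    have "(1 - x) powr (- \<alpha> - 2) \<le> (1 - q) powr (- \<alpha> - 2)"
      using x assms alpha_pos by (intro powr_mono2') auto
    moreover have "\<bar>v x\<bar> \<le> M" using M x by blast
    ultimately show ?thesis
      by (simp add: v_weighted_def abs_mult mult_mono order.trans[OF abs_ge_zero])
  qed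
  then show ?thesis by (rule absolutely_integrable_on_interval_if_bounded[OF v_weighted_measurable])
qed

lemma v_integrable: "0 < p \<Longrightarrow> q < 1 \<Longrightarrow> v integrable_on {p..q}"
  using v_absolutely_integrable set_lebesgue_integral_eq_integral(1) by blast

lemma v_weighted_integrable: "0 < p \<Longrightarrow> q < 1 \<Longrightarrow> v_weighted integrable_on {p..q}"
  using v_weighted_absolutely_integrable set_lebesgue_integral_eq_integral(1) by blast

lemma integral_mobius_term:
  assumes "0 < c" "c \<le> d" "d < a" "a < 1"
  shows "(\<lambda>s. (1 - s) powr \<alpha> * v (mobius a s)) integrable_on {c..d}"
    and "integral {c..d} (\<lambda>s. (1 - s) powr \<alpha> * v (mobius a s))
      = (1 - a) powr (\<alpha> + 1) * integral {mobius a d..mobius a c} v_weighted"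
proof -
  let ?I = "{mobius a d..mobius a c}"
  have "0 < mobius a d" using diff_le_mobius[of d a] assms by simp
  moreover have "mobius a c < 1" using mobius_less_one[of a c] assms by simp
  ultimately have G: "(\<lambda>t. (1 - a) powr (\<alpha> + 1) * v_weighted t) absolutely_integrable_on ?I"
    by (intro set_integrable_mult_right v_weighted_absolutely_integrable)
  have FG: "(1 - a) / (1 - t)^2 * ((1 - mobius a t) powr \<alpha> * v (mobius a (mobius a t)))
      = (1 - a) powr (\<alpha> + 1) * v_weighted t" if "t \<in> ?I" for t
  proof -
    have "t < 1" using that \<open>mobius a c < 1\<close> by simp
    then have "(1 - a) / (1 - t)^2 * ((1 - mobius a t) powr \<alpha> * v (mobius a (mobius a t)))
        = ((1 - a) / (1 - t)^2 * ((1 - a) / (1 - t)) powr \<alpha>) * v t"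
      using assms by (simp add: one_minus_mobius mobius_mobius)
    also have "\<dots> = (1 - a) powr (\<alpha> + 1) * v_weighted t"
      using \<open>t < 1\<close> assms divide_square_mult_powr[of "1 - a" "1 - t" \<alpha>]
      by (simp only: v_weighted_def ac_simps diff_gt_0_iff_gt)
    finally show ?thesis .
  qed
  have "d < 1" using assms by simp
  note substitution = mobius_substitution[OF assms(2) this assms(4) FG G]
  show "(\<lambda>s. (1 - s) powr \<alpha> * v (mobius a s)) integrable_on {c..d}"
    using substitution(1) set_lebesgue_integral_eq_integral(1) by blast
  show "integral {c..d} (\<lambda>s. (1 - s) powr \<alpha> * v (mobius a s))
      = (1 - a) powr (\<alpha> + 1) * integral ?I v_weighted"
    using substitution(2) by simp
qed

(* Integrate the equation over s \<in> [c, d]. *)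
lemma integral_representation:
  assumes "0 < c" "c \<le> d" "d < a" "a < 1"
  shows "(d - c) * v a = integral {c..d} v
    + (1 - a) powr (\<alpha> + 1) * integral {mobius a d..mobius a c} v_weighted
    - a powr (\<alpha> + 1) * integral {c/a..d/a} v"
proof -
  define F where "F s = (1 - s) powr \<alpha> * v (mobius a s)" for s
  have "0 < a" "v integrable_on {c/a..d/a}" using assms by (simp, intro v_integrable) simp_all
  note scaled = integral_divide_argument[OF this]
  have "v integrable_on {c..d}" using assms by (intro v_integrable) simp_all
  then have hv: "(v has_integral integral {c..d} v) {c..d}" by (rule integrable_integral)
  have hF: "(F has_integral integral {c..d} F) {c..d}"
    using integral_mobius_term(1)[OF assms] unfolding F_def[abs_def] by (rule integrable_integral)
  have h3: "((\<lambda>s. a powr \<alpha> * v (s / a)) has_integral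
      a powr \<alpha> * integral {c..d} (\<lambda>s. v (s / a))) {c..d}"
    by (rule has_integral_mult_right[OF integrable_integral[OF scaled(1)]])
  have "(d - c) * v a = integral {c..d} (\<lambda>s. v a)" using assms by simp
  also have "\<dots> = integral {c..d} (\<lambda>s. v s + F s - a powr \<alpha> * v (s / a))"
  proof (rule integral_cong)
    fix s assume "s \<in> {c..d}"
    then show "v a = v s + F s - a powr \<alpha> * v (s / a)"
      using v_equation[of a s] assms by (simp add: F_def)
  qed
  also have "\<dots> = integral {c..d} v + integral {c..d} F - a powr \<alpha> * integral {c..d} (\<lambda>s. v (s / a))"
    by (rule integral_unique[OF has_integral_diff[OF has_integral_add[OF hv hF] h3]])
  finally show ?thesis
    using integral_mobius_term(2)[OF assms] scaled(2) assms by (simp add: F_def[abs_def] powr_add)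
qed

(* integral_representation for c = 2 e and d = 4 e, with every integral written through the
   antiderivatives x \<mapsto> integral {e..x}, whose smoothness thereby passes to v. *)
definition v_representation :: "real \<Rightarrow> real \<Rightarrow> real" where
  "v_representation e a = (integral {2 * e..4 * e} v
      + (1 - a) powr (\<alpha> + 1)
        * (integral {e..mobius a (2 * e)} v_weighted - integral {e..mobius a (4 * e)} v_weighted)
      - a powr (\<alpha> + 1) * (integral {e..4 * e / a} v - integral {e..2 * e / a} v)) / (2 * e)"

lemma v_eq_v_representation:
  assumes "0 < e" "6 * e < a" "a < 1"
  shows "v a = v_representation e a"
proof -
  note points = representation_points[OF assms]
  have "integral {e..mobius a (2 * e)} v_weighted - integral {e..mobius a (4 * e)} v_weighted
      = integral {mobius a (4 * e)..mobius a (2 * e)} v_weighted"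
    using points assms by (intro integral_interval_eq_diff[symmetric] v_weighted_integrable) auto
  moreover have "integral {e..4 * e / a} v - integral {e..2 * e / a} v = integral {2 * e / a..4 * e / a} v"
    using points assms by (intro integral_interval_eq_diff[symmetric] v_integrable) auto
  ultimately show ?thesis
    using integral_representation[of "2 * e" "4 * e" a] assms unfolding v_representation_def
    by (simp add: eq_divide_eq mult.commute)
qed

lemma Ck_on_v_representation:
  assumes e: "0 < e" "6 * e < 1"
    and V: "Ck_on k {e<..<1} (\<lambda>x. integral {e..x} v)"
    and W: "Ck_on k {e<..<1} (\<lambda>x. integral {e..x} v_weighted)"
  shows "Ck_on k {6 * e<..<1} (v_representation e)"
proof -
  define U where "U = {6 * e<..<(1::real)}"
  have "open U" unfolding U_def by simp
  have U: "0 < a" "0 < 1 - a" if "a \<in> U" for a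
    using that e unfolding U_def by auto
  have in_E: "mobius a (2 * e) \<in> {e<..<1}" "mobius a (4 * e) \<in> {e<..<1}"
    "2 * e / a \<in> {e<..<1}" "4 * e / a \<in> {e<..<1}" if "a \<in> U" for a
    using representation_points[of e a] that e unfolding U_def by auto
  have mobius_Ck: "Ck_on k U (\<lambda>a. mobius a x)" if "x < 1" for x
    unfolding mobius_def using that
    by (intro Ck_on_divide[OF \<open>open U\<close> Ck_on_diff[OF \<open>open U\<close> Ck_on_ident Ck_on_const] Ck_on_const])
      simp
  have quot_Ck: "Ck_on k U (\<lambda>a. x / a)" for x
    using U by (intro Ck_on_divide[OF \<open>open U\<close> Ck_on_const Ck_on_ident]) force
  have "2 * e < 1" "4 * e < 1" using e by simp_all
  note compose = Ck_on_compose[OF \<open>open U\<close> open_greaterThanLessThan]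
  have "Ck_on k U (\<lambda>a. integral {e..mobius a (2 * e)} v_weighted)"
    using compose[OF in_E(1) W mobius_Ck[OF \<open>2 * e < 1\<close>]] by simp
  moreover have "Ck_on k U (\<lambda>a. integral {e..mobius a (4 * e)} v_weighted)"
    using compose[OF in_E(2) W mobius_Ck[OF \<open>4 * e < 1\<close>]] by simp
  moreover have "Ck_on k U (\<lambda>a. integral {e..2 * e / a} v)"
    using compose[OF in_E(3) V quot_Ck] by simp
  moreover have "Ck_on k U (\<lambda>a. integral {e..4 * e / a} v)"
    using compose[OF in_E(4) V quot_Ck] by simp
  moreover have "Ck_on k U (\<lambda>a. (1 - a) powr (\<alpha> + 1))" "Ck_on k U (\<lambda>a. a powr (\<alpha> + 1))"
    using U by (intro Ck_on_powr[OF \<open>open U\<close>] Ck_on_diff[OF \<open>open U\<close>] Ck_on_ident Ck_on_const;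
        force)+
  ultimately show ?thesis
    using e unfolding v_representation_def U_def[symmetric]
    by (intro Ck_on_divide[OF \<open>open U\<close>] Ck_on_diff[OF \<open>open U\<close>] Ck_on_add[OF \<open>open U\<close>]
        Ck_on_mult[OF \<open>open U\<close>] Ck_on_const) simp_all
qed

lemma Ck_on_v_if_Ck_on_integrals:
  assumes "0 < e" "6 * e < 1"
    and "Ck_on k {e<..<1} (\<lambda>x. integral {e..x} v)"
    and "Ck_on k {e<..<1} (\<lambda>x. integral {e..x} v_weighted)"
  shows "Ck_on k {6 * e<..<1} v"
  using Ck_on_cong[OF _ _ Ck_on_v_representation[OF assms]] v_eq_v_representation assms(1)
  by simp

lemma Ck_on_v_weighted: "Ck_on k {0<..<1} v \<Longrightarrow> Ck_on k {0<..<1} v_weighted"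
proof -
  assume v: "Ck_on k {0<..<1} v"
  have "Ck_on k {0<..<1} (\<lambda>t. v t * (1 - t) powr (- \<alpha> - 2))"
    using Ck_on_diff[OF open_greaterThanLessThan Ck_on_const Ck_on_ident]
    by (intro Ck_on_mult[OF open_greaterThanLessThan v] Ck_on_powr[OF open_greaterThanLessThan]) auto
  then show ?thesis by (simp add: v_weighted_def[abs_def])
qed

lemma Ck_on_v: "Ck_on k {0<..<1} v"
proof -
  have from_integrals:
    "Ck_on k {0<..<1} v" if integrals: "\<And>e. 0 < e \<Longrightarrow> 6 * e < 1 \<Longrightarrow>
        Ck_on k {e<..<1} (\<lambda>x. integral {e..x} v) \<and> Ck_on k {e<..<1} (\<lambda>x. integral {e..x} v_weighted)"
    for k
  proof (rule Ck_on_local)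
    fix x :: real assume x: "x \<in> {0<..<1}"
    then have "0 < x / 8" "6 * (x / 8) < 1" by auto
    then have "Ck_on k {6 * (x / 8)<..<1} v"
      using integrals[of "x / 8"] Ck_on_v_if_Ck_on_integrals[of "x / 8" k] by blast
    moreover have "x \<in> {6 * (x / 8)<..<1}" using x by simp
    ultimately show "\<exists>T. open T \<and> x \<in> T \<and> Ck_on k T v"
      using open_greaterThanLessThan by blast
  qed
  have int: "v integrable_on {e..c}" "v_weighted integrable_on {e..c}" if "0 < e" "c < 1" for e c
    using that by (simp_all add: v_integrable v_weighted_integrable)
  show ?thesis
  proof (induction k)
    case 0
    show ?case
      using int by (intro from_integrals conjI Ck_on_0_indefinite_integral) auto
  next
    case (Suc k)
    have "Ck_on k {e<..<1} v" "Ck_on k {e<..<1} v_weighted" if "0 < e" for e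
    proof -
      have "{e<..<1} \<subseteq> {0<..<1}" using that by auto
      then show "Ck_on k {e<..<1} v" "Ck_on k {e<..<1} v_weighted"
        using Ck_on_subset[OF Suc.IH] Ck_on_subset[OF Ck_on_v_weighted[OF Suc.IH]] by blast+
    qed
    then show ?case
      using int by (intro from_integrals conjI Ck_on_Suc_indefinite_integral) auto
  qed
qed

end

theorem propositionC1:
  fixes u :: "real \<Rightarrow> real" and \<alpha> :: real
  assumes "\<alpha> > 0"
    and "u \<in> borel_measurable (restrict_space lborel {0..1})"
    and "u 0 = 0" and "u 1 = 0"
    and "\<And>x y. 0 \<le> x \<Longrightarrow> x < 1 \<Longrightarrow> 0 \<le> y \<Longrightarrow> y < 1 \<Longrightarrow> x + y \<le> 1 \<Longrightarrow>
           u (1 - x) + (1 - x) powr \<alpha> * u (y / (1 - x))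
         = u y + (1 - y) powr \<alpha> * u ((1 - x - y) / (1 - y))"
  shows "\<forall>k::nat. \<forall>x\<in>{0<..<1}. (deriv ^^ k) u differentiable (at x)"
proof -
  \<comment> \<open>The boundary values \<open>u 0 = 0\<close> and \<open>u 1 = 0\<close> are not needed.\<close>
  define v where "v x = indicat_real {0..1} x *\<^sub>R u x" for x
  have v_u: "v x = u x" if "x \<in> {0..1}" for x using that by (simp add: v_def)
  interpret info_equation v \<alpha>
  proof
    show "v \<in> borel_measurable borel"
      using assms(2) borel_measurable_restrict_space_iff[of "{0..1}" lborel u]
      by (simp add: v_def[abs_def])
    fix a s :: real
    assume as: "0 < a" "a \<le> 1" "0 \<le> s" "s \<le> a" "s < 1"
    then have "s / a \<in> {0..1}" "mobius a s \<in> {0..1}"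
      using diff_le_mobius[of s a] mobius_le[of s a] by (auto simp: divide_le_eq)
    then show "v a + a powr \<alpha> * v (s / a) = v s + (1 - s) powr \<alpha> * v (mobius a s)"
      using assms(5)[of "1 - a" s] as v_u by (simp add: mobius_def)
  qed (rule assms(1))
  have "Ck_on (Suc k) {0<..<1} u" for k
    using v_u by (intro Ck_on_cong[OF _ _ Ck_on_v]) auto
  then show ?thesis using Ck_on_imp_deriv_funpow_differentiable by blast
qed

end
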